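(* Let $X$ be an $X$-set parameter, let $t\ge 0$ be an integer, let $G$ be a graph, and let $H$ be an induced subgraph of $\mathscr{X}^{\rm TAR}(G)$. If $H\cong Q_t$ (the $t$-dimensional hypercube), then $V(H)$ is an interval $[S,T]=\{R: S\subseteq R\subseteq T\}$ of length $t$ (i.e., $|T\setminus S|=t$) in the poset $(\mathcal{P}(V(G)),\subseteq)$.
   Context: All graphs are simple, finite, with nonempty vertex set. An $X$-set parameter is a graph parameter $X(G)$ defined as the minimum cardinality of an $X$-set of $G$, where the $X$-sets of each graph are subsets of its vertex set determined by some property satisfying: (1) supersets (within $V(G)$) of $X$-sets are $X$-sets; (2) the empty set is never an $X$-set; (3) an $X$-set of a disconnected graph is the union of an $X$-set of each component; (4) if $G$ has no isolated vertices, every set of $|V(G)|-1$ vertices is an $X$-set. The $X$-TAR graph $\mathscr{X}^{\rm TAR}(G)$ has as vertices all $X$-sets of $G$, with $S_1,S_2$ adjacent iff $|S_1\ominus S_2|=1$. $\mathcal{P}(V(G))$ is the power set of $V(G)$; the length of an interval is the maximum length (number of elements minus one) of a chain in it. *)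

theory Defs
  imports Main
begin

definition simple_graph :: "'a set \<Rightarrow> ('a \<Rightarrow> 'a \<Rightarrow> bool) \<Rightarrow> bool" where
  "simple_graph V E \<longleftrightarrow> finite V \<and> V \<noteq> {} \<and>
     (\<forall>x y. E x y \<longrightarrow> x \<in> V \<and> y \<in> V) \<and> (\<forall>x y. E x y \<longrightarrow> E y x) \<and> (\<forall>x. \<not> E x x)"

definition components :: "'a set \<Rightarrow> ('a \<Rightarrow> 'a \<Rightarrow> bool) \<Rightarrow> 'a set set" where
  "components V E = {{y. E\<^sup>*\<^sup>* x y} | x. x \<in> V}"

definition connected_graph :: "'a set \<Rightarrow> ('a \<Rightarrow> 'a \<Rightarrow> bool) \<Rightarrow> bool" where
  "connected_graph V E \<longleftrightarrow> (\<forall>x\<in>V. \<forall>y\<in>V. E\<^sup>*\<^sup>* x y)"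

definition restrict_edges :: "('a \<Rightarrow> 'a \<Rightarrow> bool) \<Rightarrow> 'a set \<Rightarrow> 'a \<Rightarrow> 'a \<Rightarrow> bool" where
  "restrict_edges E C = (\<lambda>x y. E x y \<and> x \<in> C \<and> y \<in> C)"

definition has_isolated :: "'a set \<Rightarrow> ('a \<Rightarrow> 'a \<Rightarrow> bool) \<Rightarrow> bool" where
  "has_isolated V E \<longleftrightarrow> (\<exists>x\<in>V. \<forall>y. \<not> E x y)"

text \<open>An X-set parameter is given by its family of X-sets: Xs V E is the set of X-sets of G=(V,E).\<close>
definition X_set_param :: "('a set \<Rightarrow> ('a \<Rightarrow> 'a \<Rightarrow> bool) \<Rightarrow> 'a set set) \<Rightarrow> bool" where
  "X_set_param Xs \<longleftrightarrow>
    (\<forall>V E. simple_graph V E \<longrightarrow>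
       Xs V E \<subseteq> Pow V
     \<and> (\<forall>S T. S \<in> Xs V E \<and> S \<subseteq> T \<and> T \<subseteq> V \<longrightarrow> T \<in> Xs V E)
     \<and> {} \<notin> Xs V E
     \<and> (\<not> connected_graph V E \<longrightarrow>
          (\<forall>S. S \<in> Xs V E \<longleftrightarrow>
               S \<subseteq> V \<and> (\<forall>C\<in>components V E. S \<inter> C \<in> Xs C (restrict_edges E C))))
     \<and> (\<not> has_isolated V E \<longrightarrow>
          (\<forall>S. S \<subseteq> V \<and> card S = card V - 1 \<longrightarrow> S \<in> Xs V E)))"

definition tar_adj :: "'b set \<Rightarrow> 'b set \<Rightarrow> bool" where
  "tar_adj S1 S2 \<longleftrightarrow> card ((S1 - S2) \<union> (S2 - S1)) = 1"

definition hypercube_verts :: "nat \<Rightarrow> nat set set" where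
  "hypercube_verts t = Pow {..<t}"

definition hypercube_adj :: "nat set \<Rightarrow> nat set \<Rightarrow> bool" where
  "hypercube_adj A B \<longleftrightarrow> card ((A - B) \<union> (B - A)) = 1"

definition induced_TAR_iso_cube :: "'a set set \<Rightarrow> nat \<Rightarrow> bool" where
  "induced_TAR_iso_cube H t \<longleftrightarrow>
    (\<exists>f. bij_betw f H (hypercube_verts t) \<and>
         (\<forall>A\<in>H. \<forall>B\<in>H. tar_adj A B \<longleftrightarrow> hypercube_adj (f A) (f B)))"

end

theory Submission
  imports Defs
begin

(* Pull the cube back along the isomorphism: this gives an injective map g from the subsets of
   {..<t} into H under which B - {i} and B go to sets differing in exactly one element. *)

lemma sym_diff_assoc: "sym_diff (sym_diff A B) C = sym_diff A (sym_diff B C)"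
  by blast

lemma image_disjoint_Un_eq_sym_diff:
  assumes "inj_on a (D \<union> E)" "D \<inter> E = {}"
  shows "a ` (D \<union> E) = sym_diff (a ` D) (a ` E)"
proof -
  have "a ` D \<inter> a ` E = {}"
    using assms by (metis image_empty inj_on_image_Int sup_ge1 sup_ge2)
  then show ?thesis by blast
qed

lemma sym_diff_image_Pow: "(\<lambda>C. sym_diff X C) ` Pow A = {R. X - A \<subseteq> R \<and> R \<subseteq> X \<union> A}"
proof
  show "{R. X - A \<subseteq> R \<and> R \<subseteq> X \<union> A} \<subseteq> (\<lambda>C. sym_diff X C) ` Pow A"
  proof
    fix R assume "R \<in> {R. X - A \<subseteq> R \<and> R \<subseteq> X \<union> A}"
    then have "R = sym_diff X (sym_diff X R)" "sym_diff X R \<in> Pow A" by blast+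
    then show "R \<in> (\<lambda>C. sym_diff X C) ` Pow A" by blast
  qed
qed blast

lemma tar_adj_iff: "tar_adj A B \<longleftrightarrow> (\<exists>u. B = sym_diff A {u})"
proof
  assume "tar_adj A B"
  then obtain u where "sym_diff A B = {u}"
    unfolding tar_adj_def by (meson card_1_singletonE)
  then have "B = sym_diff A {u}" by blast
  then show "\<exists>u. B = sym_diff A {u}" ..
next
  assume "\<exists>u. B = sym_diff A {u}"
  then obtain u where "B = sym_diff A {u}" ..
  then have "sym_diff A B = {u}" by blast
  then show "tar_adj A B" unfolding tar_adj_def by simp
qed

lemma tar_adj_common_neighbour:
  assumes "x \<noteq> y" "tar_adj (sym_diff X {x}) Z" "tar_adj (sym_diff X {y}) Z"
  shows "Z = X \<or> Z = sym_diff X {x, y}"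
proof -
  obtain u where u: "Z = sym_diff (sym_diff X {x}) {u}" using assms(2) unfolding tar_adj_iff ..
  obtain v where v: "Z = sym_diff (sym_diff X {y}) {v}" using assms(3) unfolding tar_adj_iff ..
  have flips: "(w = x) \<noteq> (w = u) \<longleftrightarrow> (w = y) \<noteq> (w = v)" for w
    using u v by (simp add: set_eq_iff) metis
  show ?thesis
  proof (cases "u = x")
    case True
    with u have "Z = sym_diff (sym_diff X {x}) {x}" by simp
    then show ?thesis by blast
  next
    case False
    with flips[of x] assms(1) have "v = x" by simp
    with flips[of u] False have "u = y" by simp
    with u have "Z = sym_diff (sym_diff X {x}) {y}" by simp
    then show ?thesis using assms(1) by blast
  qed
qed

lemma cube_map_sym_diff_image_step:
  assumes g_inj: "inj_on g (Pow I)"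
    and g_adj: "\<And>B i. B \<subseteq> I \<Longrightarrow> i \<in> B \<Longrightarrow> tar_adj (g (B - {i})) (g B)"
    and "inj_on a I" "B \<subseteq> I" "i \<in> B" "j \<in> B" "i \<noteq> j"
    and IH: "\<And>D. D \<subset> B \<Longrightarrow> g D = sym_diff (g {}) (a ` D)"
  shows "g B = sym_diff (g {}) (a ` B)"
proof -
  define C where "C = B - {i, j}"
  define X where "X = sym_diff (g {}) (a ` C)"
  have inj_B: "inj_on a B" using assms(3,4) by (rule inj_on_subset)
  have img: "a ` (C \<union> E) = sym_diff (a ` C) (a ` E)" if "E \<subseteq> {i, j}" for E
    using assms(5-7) that inj_on_subset[OF inj_B, of "C \<union> E"]
    by (intro image_disjoint_Un_eq_sym_diff) (auto simp: C_def)
  have B_split: "B - {j} = C \<union> {i}" "B - {i} = C \<union> {j}" "B = C \<union> {i, j}"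
    using assms(5-7) by (auto simp: C_def)
  have proper: "B - {j} \<subset> B" "B - {i} \<subset> B" "C \<subset> B"
    using assms(5-7) by (auto simp: C_def)
  have "g (B - {j}) = sym_diff X {a i}"
    using IH[OF proper(1)] img[of "{i}"] unfolding B_split(1) X_def
    by (simp add: sym_diff_assoc)
  moreover have "g (B - {i}) = sym_diff X {a j}"
    using IH[OF proper(2)] img[of "{j}"] unfolding B_split(2) X_def
    by (simp add: sym_diff_assoc)
  moreover have "a i \<noteq> a j" using inj_onD[OF inj_B] assms(5-7) by blast
  ultimately have "g B = X \<or> g B = sym_diff X {a i, a j}"
    using tar_adj_common_neighbour g_adj[OF assms(4)] assms(5,6) by metis
  moreover have "g B \<noteq> X"
  proof
    assume "g B = X"
    moreover have "g C = X" using IH[OF proper(3)] by (simp add: X_def)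
    ultimately have "B = C" using inj_onD[OF g_inj] assms(4) by (auto simp: C_def)
    then show False using proper(3) by simp
  qed
  moreover have "a ` B = sym_diff (a ` C) {a i, a j}"
    using img[of "{i, j}"] B_split(3) by simp
  then have "sym_diff (g {}) (a ` B) = sym_diff X {a i, a j}"
    unfolding X_def by (simp only: sym_diff_assoc)
  ultimately show ?thesis by simp
qed

lemma cube_map_eq_sym_diff_image:
  assumes "finite I" and g_inj: "inj_on g (Pow I)"
    and g_adj: "\<And>B i. B \<subseteq> I \<Longrightarrow> i \<in> B \<Longrightarrow> tar_adj (g (B - {i})) (g B)"
  obtains a where "inj_on a I" "\<And>B. B \<subseteq> I \<Longrightarrow> g B = sym_diff (g {}) (a ` B)"
proof -
  have "\<exists>u. g {i} = sym_diff (g {}) {u}" if "i \<in> I" for i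
    using g_adj[of "{i}" i] that unfolding tar_adj_iff by simp
  then obtain a where a: "\<And>i. i \<in> I \<Longrightarrow> g {i} = sym_diff (g {}) {a i}"
    by metis
  have a_inj: "inj_on a I"
  proof (rule inj_onI)
    fix i j assume "i \<in> I" "j \<in> I" "a i = a j"
    then have "g {i} = g {j}" using a by simp
    with \<open>i \<in> I\<close> \<open>j \<in> I\<close> show "i = j" using inj_onD[OF g_inj, of "{i}" "{j}"] by simp
  qed
  have "g B = sym_diff (g {}) (a ` B)" if "B \<subseteq> I" for B
    using finite_subset[OF that \<open>finite I\<close>] that
  proof (induction B rule: finite_psubset_induct)
    case (psubset B)
    consider "B = {}" | i where "B = {i}" | i j where "i \<in> B" "j \<in> B" "i \<noteq> j"
      by blast
    then show ?case
    proof cases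
      case 1
      then show ?thesis by simp
    next
      case 2
      then show ?thesis using a psubset.prems by simp
    next
      case 3
      have "g D = sym_diff (g {}) (a ` D)" if "D \<subset> B" for D
        using that psubset.prems by (intro psubset.IH) auto
      from cube_map_sym_diff_image_step[OF g_inj g_adj a_inj psubset.prems 3 this]
      show ?thesis .
    qed
  qed
  with a_inj that show ?thesis by blast
qed

lemma induced_TAR_iso_cube_interval:
  assumes "induced_TAR_iso_cube H t"
  obtains S T where "S \<subseteq> T" "H = {R. S \<subseteq> R \<and> R \<subseteq> T}" "card (T - S) = t"
proof -
  obtain f where f_bij: "bij_betw f H (Pow {..<t})"
    and f_adj: "\<forall>A\<in>H. \<forall>B\<in>H. tar_adj A B \<longleftrightarrow> hypercube_adj (f A) (f B)"
    using assms unfolding induced_TAR_iso_cube_def hypercube_verts_def by blast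
  define g where "g = inv_into H f"
  have g_bij: "bij_betw g (Pow {..<t}) H"
    unfolding g_def by (rule bij_betw_inv_into[OF f_bij])
  have f_g: "f (g B) = B" if "B \<subseteq> {..<t}" for B
    unfolding g_def using bij_betw_inv_into_right[OF f_bij] that by blast
  have g_adj: "tar_adj (g (B - {i})) (g B)" if "B \<subseteq> {..<t}" "i \<in> B" for B i
  proof -
    have "sym_diff (B - {i}) B = {i}" using that(2) by blast
    then have "hypercube_adj (B - {i}) B" unfolding hypercube_adj_def by simp
    moreover have "B - {i} \<subseteq> {..<t}" using that(1) by blast
    moreover have "g (B - {i}) \<in> H" "g B \<in> H"
      using bij_betwE[OF g_bij] that(1) \<open>B - {i} \<subseteq> {..<t}\<close> by blast+
    ultimately show ?thesis
      using f_adj f_g[OF that(1)] f_g[OF \<open>B - {i} \<subseteq> {..<t}\<close>] by simp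
  qed
  obtain a where a_inj: "inj_on a {..<t}"
    and g_eq: "\<And>B. B \<subseteq> {..<t} \<Longrightarrow> g B = sym_diff (g {}) (a ` B)"
    using cube_map_eq_sym_diff_image[OF finite_lessThan bij_betw_imp_inj_on[OF g_bij] g_adj] by blast
  define A where "A = a ` {..<t}"
  have "H = g ` Pow {..<t}"
    using bij_betw_imp_surj_on[OF g_bij] by simp
  also have "\<dots> = sym_diff (g {}) ` (image a ` Pow {..<t})"
    unfolding image_image by (intro image_cong refl g_eq) simp
  also have "\<dots> = {R. g {} - A \<subseteq> R \<and> R \<subseteq> g {} \<union> A}"
    unfolding A_def image_Pow_surj[OF refl] by (rule sym_diff_image_Pow)
  finally have "H = {R. g {} - A \<subseteq> R \<and> R \<subseteq> g {} \<union> A}" .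
  moreover have "g {} \<union> A - (g {} - A) = A" by blast
  then have "card (g {} \<union> A - (g {} - A)) = t"
    using card_image[OF a_inj] by (simp add: A_def)
  ultimately show ?thesis using that[of "g {} - A" "g {} \<union> A"] by blast
qed

theorem lemma2p1:
  fixes Xs :: "'a set \<Rightarrow> ('a \<Rightarrow> 'a \<Rightarrow> bool) \<Rightarrow> 'a set set"
    and V :: "'a set" and E :: "'a \<Rightarrow> 'a \<Rightarrow> bool"
    and H :: "'a set set" and t :: nat
  assumes "X_set_param Xs"
    and "simple_graph V E"
    and "H \<subseteq> Xs V E"
    and "induced_TAR_iso_cube H t"
  shows "\<exists>S T. S \<subseteq> T \<and> T \<subseteq> V \<and> H = {R. S \<subseteq> R \<and> R \<subseteq> T} \<and> card (T - S) = t"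
proof -
  obtain S T where ST: "S \<subseteq> T" "H = {R. S \<subseteq> R \<and> R \<subseteq> T}" "card (T - S) = t"
    using induced_TAR_iso_cube_interval[OF assms(4)] .
  have "Xs V E \<subseteq> Pow V"
    using assms(1,2) unfolding X_set_param_def by simp
  moreover have "T \<in> H" using ST by blast
  ultimately have "T \<subseteq> V" using assms(3) by blast
  with ST show ?thesis by blast
qed

end
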